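(* Let $n = 4k+3$ with $k\ge 0$ an integer, and let $m \ge 3n+5$. Then every product $(a,a+2)(b,b+2)\in S_m$ of two even-string transpositions, and every such product of two odd-string transpositions, with $a,a+2,b,b+2$ four distinct numbers, is a product of $n$-crossing permutations over $S_m$.
   Context: For integers $2\le n\le m$ and $1 \le j \le m-n+1$, the $n$-crossing permutation $\pi_j\in S_m$ is $\pi_j=(j,\,j+n-1)(j+1,\,j+n-2)\cdots$, i.e. the involution sending $i \mapsto 2j+n-1-i$ for $j\le i\le j+n-1$ and fixing all other elements of $\{1,\dots,m\}$. The $n$-crossing permutations over $S_m$ are $\pi_1,\dots,\pi_{m-n+1}$. A transposition $(i,i+2)\in S_m$ (with $1\le i\le m-2$) is called an even-string transposition if $i$ is even and an odd-string transposition if $i$ is odd. *)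

theory Defs
  imports "HOL-Combinatorics.Transposition"
begin

text \<open>Permutations of {1..m} are represented as functions nat => nat that are the
identity outside {1..m}. The n-crossing permutation pi_j sends i to 2j+n-1-i for
j <= i <= j+n-1 and fixes everything else.\<close>

definition crossing_perm :: "nat \<Rightarrow> nat \<Rightarrow> nat \<Rightarrow> nat" where
  "crossing_perm n j i = (if j \<le> i \<and> i \<le> j + n - 1 then 2 * j + n - 1 - i else i)"

definition crossing_product :: "nat \<Rightarrow> nat \<Rightarrow> (nat \<Rightarrow> nat) \<Rightarrow> bool" where
  "crossing_product n m \<sigma> \<longleftrightarrow>
     (\<exists>js. set js \<subseteq> {1..m - n + 1} \<and> \<sigma> = foldr (\<lambda>j f. crossing_perm n j \<circ> f) js id)"

end

theory Submission
  imports Defs "HOL-Combinatorics.Cycles"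
begin

(* Write pi_j for crossing_perm n j. For n >= 6 and m >= 2n + 2 every 3-cycle
   (c, c+2, c+4) inside {1..m} is a product of crossing permutations. The window
   shifts pi_(j+n+1) pi_(j+n) and pi_j pi_(j+1) move only points of {j+n..j+2n}
   and {j..j+n} respectively, so their commutator is a 3-cycle through the common
   point j+n, namely (j+n-2, j+n, j+n+2); taking j = 1 or j = 2 gives both
   parities. Conjugating by pi_(j+1) pi_j, which is z |-> z+2 on most of its window,
   moves such a cycle by 2. Then (a, a+2)(a+2d, a+2d+2) telescopes into d of these
   3-cycles. For n = 3 the crossing permutations are the transpositions (j, j+2)
   themselves, so of the hypothesis n = 4k+3 only n = 3 or n >= 6 is used. *)

lemma crossing_perm_involutive [simp]: "crossing_perm n j (crossing_perm n j z) = z"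
  unfolding crossing_perm_def by auto

lemma crossing_perm_outside: "z < j \<or> j + n \<le> z \<Longrightarrow> crossing_perm n j z = z"
  unfolding crossing_perm_def by auto

lemma crossing_perm_comp_self [simp]: "crossing_perm n j \<circ> crossing_perm n j = id"
  by (simp add: fun_eq_iff)

lemma bij_crossing_perm: "bij (crossing_perm n j)"
  using o_bij crossing_perm_comp_self by blast

lemma inv_crossing_perm [simp]: "inv (crossing_perm n j) = crossing_perm n j"
  by (rule inv_unique_comp) simp_all

lemma crossing_perm_shift:
  "j \<le> z \<Longrightarrow> z + 2 \<le> j + n \<Longrightarrow> crossing_perm n (j + 1) (crossing_perm n j z) = z + 2"
  unfolding crossing_perm_def by auto

lemma commutator_eq_cycle_if_supports_meet_in_point:
  fixes \<sigma> \<tau> :: "'a \<Rightarrow> 'a"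
  assumes "bij \<sigma>" "bij \<tau>" "\<sigma> p \<noteq> p" "\<tau> p \<noteq> p"
    and supports_meet_in_p: "\<And>x. x \<noteq> p \<Longrightarrow> \<sigma> x = x \<or> \<tau> x = x"
  shows "\<sigma> \<circ> \<tau> \<circ> inv \<sigma> \<circ> inv \<tau> = cycle_of_list [\<tau> p, p, \<sigma> p]"
proof -
  let ?c = "transpose (\<tau> p) p \<circ> transpose p (\<sigma> p)"
  \<comment> \<open>Checking \<open>\<sigma> \<circ> \<tau> = ?c \<circ> \<tau> \<circ> \<sigma>\<close> pointwise avoids evaluating the inverses.\<close>
  have \<sigma>_eq: "\<sigma> x = \<sigma> y \<longleftrightarrow> x = y" and \<tau>_eq: "\<tau> x = \<tau> y \<longleftrightarrow> x = y" for x y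
    using assms(1,2) by (auto dest: bij_is_inj injD)
  have \<tau>_fixes: "\<tau> (\<sigma> x) = \<sigma> x" if "\<sigma> x \<noteq> x" "\<sigma> x \<noteq> p" for x
    using supports_meet_in_p[OF that(2)] that(1) \<sigma>_eq by metis
  have \<sigma>_fixes: "\<sigma> (\<tau> x) = \<tau> x" if "\<tau> x \<noteq> x" "\<tau> x \<noteq> p" for x
    using supports_meet_in_p[OF that(2)] that(1) \<tau>_eq by metis
  have \<sigma>\<tau>p: "\<sigma> (\<tau> p) = \<tau> p" and \<tau>\<sigma>p: "\<tau> (\<sigma> p) = \<sigma> p"
    using \<sigma>_fixes[of p] \<tau>_fixes[of p] assms(3,4) by auto
  have \<sigma>p_ne_\<tau>p: "\<sigma> p \<noteq> \<tau> p"
    using \<sigma>\<tau>p \<sigma>_eq assms(3) by metis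
  have "\<sigma> (\<tau> w) = ?c (\<tau> (\<sigma> w))" for w
  proof (cases "w = p")
    case True
    then show ?thesis using \<sigma>\<tau>p \<tau>\<sigma>p assms(3,4) by (auto simp: transpose_def)
  next
    case False
    then consider "\<sigma> w = w" "\<tau> w = w" | "\<sigma> w \<noteq> w" "\<tau> w = w" | "\<sigma> w = w" "\<tau> w \<noteq> w"
      using supports_meet_in_p by blast
    then show ?thesis
    proof cases
      case 1
      then have "w \<noteq> \<sigma> p" "w \<noteq> \<tau> p" using False \<sigma>_eq \<tau>_eq by metis+
      then show ?thesis using 1 False by (simp add: transpose_def)
    next
      case 2
      show ?thesis
      proof (cases "\<sigma> w = p")
        case True
        then show ?thesis using 2 \<sigma>p_ne_\<tau>p assms(4) by simp
      next
        case False
        moreover have "\<sigma> w \<noteq> \<sigma> p" "\<sigma> w \<noteq> \<tau> p" using \<open>w \<noteq> p\<close> 2 \<sigma>_eq \<sigma>\<tau>p by metis+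
        ultimately show ?thesis using 2 \<tau>_fixes[of w] by simp
      qed
    next
      case 3
      show ?thesis
      proof (cases "\<tau> w = p")
        case True
        then show ?thesis using 3 \<sigma>p_ne_\<tau>p assms(3) by simp
      next
        case False
        moreover have "\<tau> w \<noteq> \<tau> p" "\<tau> w \<noteq> \<sigma> p" using \<open>w \<noteq> p\<close> 3 \<tau>_eq \<tau>\<sigma>p by metis+
        ultimately show ?thesis using 3 \<sigma>_fixes[of w] by simp
      qed
    qed
  qed
  then have "\<sigma> \<circ> \<tau> = ?c \<circ> \<tau> \<circ> \<sigma>" by (simp add: fun_eq_iff)
  then show ?thesis
    using assms(1,2) by (simp add: fun_eq_iff bij_is_surj surj_f_inv_f)
qed

definition crossing_word :: "nat \<Rightarrow> nat list \<Rightarrow> nat \<Rightarrow> nat" where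
  "crossing_word n js = foldr (\<lambda>j f. crossing_perm n j \<circ> f) js id"

lemma crossing_word_Nil [simp]: "crossing_word n [] = id"
  by (simp add: crossing_word_def)

lemma crossing_word_Cons [simp]: "crossing_word n (j # js) = crossing_perm n j \<circ> crossing_word n js"
  by (simp add: crossing_word_def)

lemma crossing_word_append: "crossing_word n (xs @ ys) = crossing_word n xs \<circ> crossing_word n ys"
  by (induction xs) (simp_all add: comp_assoc)

lemma crossing_word_rev_comp: "crossing_word n (rev js) \<circ> crossing_word n js = id"
proof (induction js)
  case (Cons j js)
  then show ?case by (simp add: crossing_word_append fun_eq_iff)
qed simp

lemma bij_crossing_word: "bij (crossing_word n js)"
  using crossing_word_rev_comp[of n js] crossing_word_rev_comp[of n "rev js"] o_bij by auto

lemma inv_crossing_word: "inv (crossing_word n js) = crossing_word n (rev js)"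
  using crossing_word_rev_comp[of n js] crossing_word_rev_comp[of n "rev js"]
  by (intro inv_unique_comp) simp_all

lemma crossing_product_iff_word:
  "crossing_product n m \<sigma> \<longleftrightarrow> (\<exists>js. set js \<subseteq> {1..m - n + 1} \<and> \<sigma> = crossing_word n js)"
  unfolding crossing_product_def crossing_word_def ..

lemma crossing_product_word: "set js \<subseteq> {1..m - n + 1} \<Longrightarrow> crossing_product n m (crossing_word n js)"
  unfolding crossing_product_iff_word by blast

lemma crossing_product_id: "crossing_product n m id"
  using crossing_product_word[of "[]"] by simp

lemma crossing_product_comp:
  "crossing_product n m \<sigma> \<Longrightarrow> crossing_product n m \<tau> \<Longrightarrow> crossing_product n m (\<sigma> \<circ> \<tau>)"
  unfolding crossing_product_iff_word by (metis crossing_word_append Un_subset_iff set_append)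

lemma crossing_product_conj_iff:
  assumes "set js \<subseteq> {1..m - n + 1}"
  shows "crossing_product n m (crossing_word n js \<circ> \<sigma> \<circ> inv (crossing_word n js))
    \<longleftrightarrow> crossing_product n m \<sigma>"
proof
  have word: "crossing_product n m (crossing_word n js)" "crossing_product n m (inv (crossing_word n js))"
    using assms by (simp_all add: crossing_product_word inv_crossing_word)
  show "crossing_product n m \<sigma>" if "crossing_product n m (crossing_word n js \<circ> \<sigma> \<circ> inv (crossing_word n js))"
  proof -
    have "\<sigma> = inv (crossing_word n js) \<circ> (crossing_word n js \<circ> \<sigma> \<circ> inv (crossing_word n js)) \<circ> crossing_word n js"
      using bij_crossing_word[of n js]
      by (simp add: fun_eq_iff bij_is_inj bij_is_surj surj_f_inv_f)
    then show ?thesis using that word by (metis crossing_product_comp)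
  qed
  show "crossing_product n m (crossing_word n js \<circ> \<sigma> \<circ> inv (crossing_word n js))" if "crossing_product n m \<sigma>"
    using that word by (metis crossing_product_comp)
qed

definition cycle3 :: "nat \<Rightarrow> nat \<Rightarrow> nat" where
  "cycle3 c = cycle_of_list [c, c + 2, c + 4]"

lemma crossing_word_commutator_eq_cycle3:
  assumes "2 \<le> n"
  shows "crossing_word n [j+n+1, j+n, j, j+1, j+n, j+n+1, j+1, j] = cycle3 (j+n-2)"
proof -
  define \<sigma> where "\<sigma> = crossing_perm n (j+n+1) \<circ> crossing_perm n (j+n)"
  define \<tau> where "\<tau> = crossing_perm n j \<circ> crossing_perm n (j+1)"
  have \<sigma>_at: "\<sigma> (j+n) = j+n+2" and \<tau>_at: "\<tau> (j+n) = j+n-2"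
    using assms by (auto simp: \<sigma>_def \<tau>_def crossing_perm_def)
  have "crossing_word n [j+n+1, j+n, j, j+1, j+n, j+n+1, j+1, j] = \<sigma> \<circ> \<tau> \<circ> inv \<sigma> \<circ> inv \<tau>"
    by (simp add: \<sigma>_def \<tau>_def o_inv_distrib bij_crossing_perm comp_assoc)
  also have "\<dots> = cycle_of_list [\<tau> (j+n), j+n, \<sigma> (j+n)]"
  proof (rule commutator_eq_cycle_if_supports_meet_in_point)
    show "bij \<sigma>" "bij \<tau>" by (simp_all add: \<sigma>_def \<tau>_def bij_comp bij_crossing_perm)
    show "\<sigma> (j+n) \<noteq> j+n" "\<tau> (j+n) \<noteq> j+n"
      using assms by (simp_all add: \<sigma>_at \<tau>_at)
    show "\<sigma> x = x \<or> \<tau> x = x" if "x \<noteq> j+n" for x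
      using that by (cases "x < j+n") (auto simp: \<sigma>_def \<tau>_def crossing_perm_outside)
  qed
  also have "\<dots> = cycle3 (j+n-2)"
  proof -
    have "j + n - 2 + 2 = j + n" "j + n - 2 + 4 = j + n + 2"
      using assms by arith+
    then show ?thesis by (simp only: \<sigma>_at \<tau>_at cycle3_def)
  qed
  finally show ?thesis .
qed

lemma crossing_product_cycle3_shift_iff:
  assumes "6 \<le> n" "n < m" "1 \<le> x" "x + 6 \<le> m"
  shows "crossing_product n m (cycle3 (x + 2)) \<longleftrightarrow> crossing_product n m (cycle3 x)"
proof -
  \<comment> \<open>The window \<open>{j..j+n}\<close> of the shift must contain \<open>x..x+6\<close> while keeping \<open>j \<le> m - n\<close>.\<close>
  define j where "j = min x (m - n)"
  let ?g = "crossing_word n [j+1, j]"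
  have j: "set [j+1, j] \<subseteq> {1..m - n + 1}"
    using assms by (auto simp: j_def)
  have "?g z = z + 2" if "z \<in> {x, x + 2, x + 4}" for z
  proof -
    have "j \<le> z" "z + 2 \<le> j + n"
      using that assms by (auto simp: j_def)
    then show ?thesis using crossing_perm_shift by simp
  qed
  then have shifted: "map ?g [x, x + 2, x + 4] = [x + 2, x + 2 + 2, x + 2 + 4]"
    by simp
  have "?g \<circ> cycle3 x \<circ> inv ?g = cycle_of_list (map ?g [x, x + 2, x + 4])"
    unfolding cycle3_def by (rule conjugation_of_cycle) (simp, rule bij_crossing_word)
  also have "\<dots> = cycle3 (x + 2)"
    by (simp only: shifted cycle3_def)
  finally show ?thesis
    using crossing_product_conj_iff[OF j, of "cycle3 x"] by (simp only:)
qed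

lemma crossing_product_cycle3_shift_iff_multiple:
  assumes "6 \<le> n" "n < m" "1 \<le> x" "x + 2 * d + 4 \<le> m"
  shows "crossing_product n m (cycle3 (x + 2 * d)) \<longleftrightarrow> crossing_product n m (cycle3 x)"
  using assms(4)
proof (induction d)
  case (Suc d)
  have "crossing_product n m (cycle3 (x + 2 * d + 2)) \<longleftrightarrow> crossing_product n m (cycle3 (x + 2 * d))"
    by (rule crossing_product_cycle3_shift_iff) (use assms Suc.prems in auto)
  also have "\<dots> \<longleftrightarrow> crossing_product n m (cycle3 x)"
    using Suc by simp
  finally show ?case by (simp add: add.assoc)
qed simp

lemma even_add_obtain_double_diff:
  fixes x y :: nat
  assumes "even (x + y)" "x \<le> y"
  obtains d where "y = x + 2 * d"
proof -
  have "even (y - x)"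
    using assms by (simp add: add.commute)
  then obtain d where "y - x = 2 * d" ..
  with assms(2) have "y = x + 2 * d" by simp
  then show thesis by (rule that)
qed

lemma crossing_product_cycle3:
  assumes "6 \<le> n" "2 * n + 2 \<le> m" "1 \<le> x" "x + 4 \<le> m"
  shows "crossing_product n m (cycle3 x)"
proof -
  define j :: nat where "j = (if even (x + n) then 2 else 1)"
  define c where "c = j + n - 2"
  have "crossing_product n m (crossing_word n [j+n+1, j+n, j, j+1, j+n, j+n+1, j+1, j])"
    by (rule crossing_product_word) (use assms in \<open>auto simp: j_def\<close>)
  then have base: "crossing_product n m (cycle3 c)"
    using crossing_word_commutator_eq_cycle3[of n j] assms(1) by (simp add: c_def)
  have "even (x + c)" "1 \<le> c" "c + 4 \<le> m"
    using assms by (auto simp: c_def j_def)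
  show ?thesis
  proof (cases "x \<le> c")
    case True
    with \<open>even (x + c)\<close> obtain d where "c = x + 2 * d"
      by (rule even_add_obtain_double_diff)
    then show ?thesis
      using crossing_product_cycle3_shift_iff_multiple[of n m x d] base assms \<open>c + 4 \<le> m\<close> by simp
  next
    case False
    then have "c \<le> x" by simp
    with \<open>even (x + c)\<close> obtain d where "x = c + 2 * d"
      by (metis add.commute even_add_obtain_double_diff)
    then show ?thesis
      using crossing_product_cycle3_shift_iff_multiple[of n m c d] base assms \<open>1 \<le> c\<close> by simp
  qed
qed

lemma crossing_product_transpose_pair:
  assumes "6 \<le> n" "2 * n + 2 \<le> m" "1 \<le> a" "a + 2 * d + 2 \<le> m"
  shows "crossing_product n m (transpose a (a + 2) \<circ> transpose (a + 2 * d) (a + 2 * d + 2))"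
  using assms(4)
proof (induction d)
  case 0
  show ?case by (simp only: mult_0_right add_0_right transpose_comp_involutory crossing_product_id)
next
  case (Suc d)
  have split: "transpose a (a + 2) \<circ> transpose (a + 2 * Suc d) (a + 2 * Suc d + 2)
      = (transpose a (a + 2) \<circ> transpose (a + 2 * d) (a + 2 * d + 2)) \<circ> cycle3 (a + 2 * d)"
    by (simp add: cycle3_def fun_eq_iff transpose_def)
  have "crossing_product n m (transpose a (a + 2) \<circ> transpose (a + 2 * d) (a + 2 * d + 2))"
    by (rule Suc.IH) (use Suc.prems in simp)
  moreover have "crossing_product n m (cycle3 (a + 2 * d))"
    by (rule crossing_product_cycle3) (use assms Suc.prems in auto)
  ultimately show ?case
    unfolding split by (rule crossing_product_comp)
qed

lemma crossing_perm_3: "crossing_perm 3 j = transpose j (j + 2)"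
  by (auto simp: fun_eq_iff crossing_perm_def transpose_def)

theorem lemma4p3:
  fixes k n m a b :: nat
  assumes "n = 4 * k + 3"
    and "m \<ge> 3 * n + 5"
    and "1 \<le> a" "a \<le> m - 2" "1 \<le> b" "b \<le> m - 2"
    and "(even a \<and> even b) \<or> (odd a \<and> odd b)"
    and "distinct [a, a + 2, b, b + 2]"
  shows "crossing_product n m (transpose a (a + 2) \<circ> transpose b (b + 2))"
proof (cases "k = 0")
  case True
  with assms(1) have "n = 3" by simp
  then have "transpose a (a + 2) \<circ> transpose b (b + 2) = crossing_word n [a, b]"
    by (simp add: crossing_perm_3)
  moreover have "set [a, b] \<subseteq> {1..m - n + 1}"
    using assms(3-6) \<open>n = 3\<close> by auto
  ultimately show ?thesis
    using crossing_product_word by metis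
next
  case False
  then have n: "6 \<le> n" "2 * n + 2 \<le> m" using assms(1,2) by auto
  have commute: "transpose a (a + 2) \<circ> transpose b (b + 2) = transpose b (b + 2) \<circ> transpose a (a + 2)"
    using assms(8) by (auto simp: fun_eq_iff transpose_def)
  have pair: "crossing_product n m (transpose x (x + 2) \<circ> transpose y (y + 2))"
    if xy: "x \<le> y" "even (x + y)" "1 \<le> x" "y + 2 \<le> m" for x y
  proof -
    obtain d where "y = x + 2 * d"
      using xy(2,1) by (rule even_add_obtain_double_diff)
    then show ?thesis using crossing_product_transpose_pair[OF n, of x d] that by simp
  qed
  show ?thesis
    using pair[of a b] pair[of b a] commute assms(3-7) by (cases "a \<le> b") auto
qed

end
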